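(* Let $R$ be a commutative Artinian ring, $M$ a non-zero $R$-module, and $M=\sum_{i=1}^n K_i$ a minimal PS-hollow representation of $M$. Suppose that every submodule of $K_i$ is PS-hollow (in $M$) for all $i\in\{1,\dots,n\}$. If $In(K_i)\cap In(K_j)=0$ for all $i\neq j$ in $\{1,\dots,n\}$, then $M=\bigoplus_{i=1}^n K_i$.
   Context: An $R$-submodule $N\leq M$ is PS-hollow iff for every ideal $I\leq R$ and every submodule $L\leq M$: $N\subseteq IM+L$ implies $N\subseteq IM$ or $N\subseteq L$. For PS-hollow $N$: $A_N=\{I\leq R: N\subseteq IM\}$, $H_N$ the set of minimal elements of $A_N$, $In(N)=\bigcap_{I\in H_N}IM$ ($=M$ if $H_N=\emptyset$); $N$ is $H$-PS-hollow iff PS-hollow with $H_N=H$. A minimal PS-hollow representation is $M=\sum_{i=1}^n K_i$ with each $K_i$ $H_i$-PS-hollow, $In(K_1),\dots,In(K_n)$ pairwise incomparable, and $K_j\not\subseteq\sum_{i\neq j}K_i$ for all $j$. *)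

theory Defs
  imports Complex_Main
begin

text \<open>Modules: the ambient R-module M is the whole carrier type 'm, with scalar
multiplication scale satisfying the axioms of the library locale module
(R is the type 'a of class comm_ring_1).\<close>

definition is_ideal :: "'a::comm_ring_1 set \<Rightarrow> bool" where
  "is_ideal I \<longleftrightarrow> 0 \<in> I \<and> (\<forall>x\<in>I. \<forall>y\<in>I. x + y \<in> I) \<and> (\<forall>r. \<forall>x\<in>I. r * x \<in> I)"

definition artinian_ring :: "'a::comm_ring_1 itself \<Rightarrow> bool" where
  "artinian_ring _ \<longleftrightarrow>
     (\<forall>f :: nat \<Rightarrow> 'a set. (\<forall>k. is_ideal (f k)) \<and> (\<forall>k. f (Suc k) \<subseteq> f k)
        \<longrightarrow> (\<exists>N. \<forall>k\<ge>N. f k = f N))"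

definition ideal_mult :: "('a::comm_ring_1 \<Rightarrow> 'm::ab_group_add \<Rightarrow> 'm) \<Rightarrow> 'a set \<Rightarrow> 'm set" where
  "ideal_mult scale I = module.span scale {scale r m | r m. r \<in> I}"

definition set_plus_mod :: "'m::ab_group_add set \<Rightarrow> 'm set \<Rightarrow> 'm set" where
  "set_plus_mod A B = {a + b | a b. a \<in> A \<and> b \<in> B}"

definition PS_hollow :: "('a::comm_ring_1 \<Rightarrow> 'm::ab_group_add \<Rightarrow> 'm) \<Rightarrow> 'm set \<Rightarrow> bool" where
  "PS_hollow scale N \<longleftrightarrow> module.subspace scale N \<and>
     (\<forall>I L. is_ideal I \<longrightarrow> module.subspace scale L \<longrightarrow>
        N \<subseteq> set_plus_mod (ideal_mult scale I) L \<longrightarrow>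
        N \<subseteq> ideal_mult scale I \<or> N \<subseteq> L)"

definition A_set :: "('a::comm_ring_1 \<Rightarrow> 'm::ab_group_add \<Rightarrow> 'm) \<Rightarrow> 'm set \<Rightarrow> 'a set set" where
  "A_set scale N = {I. is_ideal I \<and> N \<subseteq> ideal_mult scale I}"

definition H_set :: "('a::comm_ring_1 \<Rightarrow> 'm::ab_group_add \<Rightarrow> 'm) \<Rightarrow> 'm set \<Rightarrow> 'a set set" where
  "H_set scale N = {I \<in> A_set scale N. \<forall>J \<in> A_set scale N. J \<subseteq> I \<longrightarrow> J = I}"

definition In_sub :: "('a::comm_ring_1 \<Rightarrow> 'm::ab_group_add \<Rightarrow> 'm) \<Rightarrow> 'm set \<Rightarrow> 'm set" where
  "In_sub scale N = (if H_set scale N = {} then UNIV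
                      else (\<Inter>I \<in> H_set scale N. ideal_mult scale I))"

definition H_PS_hollow ::
  "('a::comm_ring_1 \<Rightarrow> 'm::ab_group_add \<Rightarrow> 'm) \<Rightarrow> 'a set set \<Rightarrow> 'm set \<Rightarrow> bool" where
  "H_PS_hollow scale H N \<longleftrightarrow> PS_hollow scale N \<and> H_set scale N = H"

definition min_PS_hollow_rep ::
  "('a::comm_ring_1 \<Rightarrow> 'm::ab_group_add \<Rightarrow> 'm) \<Rightarrow> nat \<Rightarrow> (nat \<Rightarrow> 'm set) \<Rightarrow> bool" where
  "min_PS_hollow_rep scale n K \<longleftrightarrow>
     module.span scale (\<Union>i\<in>{1..n}. K i) = UNIV \<and>
     (\<forall>i\<in>{1..n}. \<exists>H. H_PS_hollow scale H (K i)) \<and>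
     (\<forall>i\<in>{1..n}. \<forall>j\<in>{1..n}. i \<noteq> j \<longrightarrow> \<not> In_sub scale (K i) \<subseteq> In_sub scale (K j)) \<and>
     (\<forall>j\<in>{1..n}. \<not> K j \<subseteq> module.span scale (\<Union>i\<in>{1..n} - {j}. K i))"

definition internal_direct_sum ::
  "('a::comm_ring_1 \<Rightarrow> 'm::ab_group_add \<Rightarrow> 'm) \<Rightarrow> nat \<Rightarrow> (nat \<Rightarrow> 'm set) \<Rightarrow> bool" where
  "internal_direct_sum scale n K \<longleftrightarrow>
     module.span scale (\<Union>i\<in>{1..n}. K i) = UNIV \<and>
     (\<forall>j\<in>{1..n}. K j \<inter> module.span scale (\<Union>i\<in>{1..n} - {j}. K i) = {0})"

end

theory Submission
  imports Defs
begin

text \<open>Let x lie in K_j and in the sum of the K_i over a finite set S not containing j,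
and pick i in S. The cyclic module Rx is PS-hollow and lies in K_i + L, L the sum over S - {i}.
If x is outside some minimal IM containing K_i, i.e. outside In(K_i), PS-hollowness puts Rx
into L, and induction on S applies. Otherwise x lies in In(K_i), and in In(K_j) because
K_j is contained in In(K_j); the hypothesis In(K_i) \<inter> In(K_j) = 0 gives x = 0.\<close>

lemma subset_In_sub: "N \<subseteq> In_sub scale N"
  unfolding In_sub_def H_set_def A_set_def by auto

context module
begin

lemma span_Un_subset_set_plus_mod:
  assumes "K \<subseteq> ideal_mult scale I" and "subspace L"
  shows "span (K \<union> L) \<subseteq> set_plus_mod (ideal_mult scale I) L"
proof -
  have "span (K \<union> L) \<subseteq> span (ideal_mult scale I \<union> L)"
    using assms(1) by (intro span_mono) blast
  also have "\<dots> = set_plus_mod (ideal_mult scale I) L"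
    using assms(2) by (simp add: span_Un span_span span_eq_iff[THEN iffD2] ideal_mult_def set_plus_mod_def)
  finally show ?thesis .
qed

lemma PS_hollow_subset_span_Un:
  assumes "PS_hollow scale N" and "N \<subseteq> span (K \<union> L)" and "subspace L"
  shows "N \<subseteq> In_sub scale K \<or> N \<subseteq> L"
proof (rule disjCI)
  assume "\<not> N \<subseteq> L"
  show "N \<subseteq> In_sub scale K"
  proof (rule ccontr)
    assume "\<not> N \<subseteq> In_sub scale K"
    then obtain I where I: "I \<in> H_set scale K" and "\<not> N \<subseteq> ideal_mult scale I"
      unfolding In_sub_def by (auto split: if_splits)
    moreover have "is_ideal I" and "K \<subseteq> ideal_mult scale I"
      using I unfolding H_set_def A_set_def by auto
    moreover have "N \<subseteq> set_plus_mod (ideal_mult scale I) L"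
      using span_Un_subset_set_plus_mod assms(2,3) calculation by blast
    ultimately show False
      using assms(1,3) \<open>\<not> N \<subseteq> L\<close> unfolding PS_hollow_def by blast
  qed
qed

lemma In_sub_disjoint_imp_independent:
  assumes "finite S" and "j \<notin> S"
    and cyclic: "\<forall>x\<in>K j. PS_hollow scale (span {x})"
    and disjoint: "\<forall>i\<in>S. In_sub scale (K i) \<inter> In_sub scale (K j) = {0}"
  shows "K j \<inter> span (\<Union>i\<in>S. K i) \<subseteq> {0}"
  using assms(1,2) disjoint
proof (induction S rule: finite_induct)
  case empty
  then show ?case by simp
next
  case (insert i S)
  show ?case
  proof
    fix x assume x: "x \<in> K j \<inter> span (\<Union>i\<in>insert i S. K i)"
    have "span (\<Union>i\<in>insert i S. K i) \<subseteq> span (K i \<union> span (\<Union>i\<in>S. K i))"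
      by (intro span_mono) (auto intro: span_base)
    then have "span {x} \<subseteq> span (K i \<union> span (\<Union>i\<in>S. K i))"
      using x by (intro span_minimal) auto
    then have "span {x} \<subseteq> In_sub scale (K i) \<or> span {x} \<subseteq> span (\<Union>i\<in>S. K i)"
      using PS_hollow_subset_span_Un cyclic x by blast
    moreover have "x \<in> In_sub scale (K j)"
      using subset_In_sub x by blast
    ultimately show "x \<in> {0}"
      using insert x span_base[of x "{x}"] by blast
  qed
qed

end

theorem theorem5p23:
  fixes scale :: "'a::comm_ring_1 \<Rightarrow> 'm::ab_group_add \<Rightarrow> 'm"
    and n :: nat and K :: "nat \<Rightarrow> 'm set"
  assumes "module scale"
    and "artinian_ring TYPE('a)"
    and "\<exists>x::'m. x \<noteq> 0"
    and "min_PS_hollow_rep scale n K"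
    and "\<forall>i\<in>{1..n}. \<forall>N. module.subspace scale N \<and> N \<subseteq> K i \<longrightarrow> PS_hollow scale N"
    and "\<forall>i\<in>{1..n}. \<forall>j\<in>{1..n}. i \<noteq> j \<longrightarrow> In_sub scale (K i) \<inter> In_sub scale (K j) = {0}"
  shows "internal_direct_sum scale n K"
  unfolding internal_direct_sum_def
proof (intro conjI ballI)
  interpret module scale by (rule assms(1))
  show "span (\<Union>i\<in>{1..n}. K i) = UNIV"
    using assms(4) unfolding min_PS_hollow_rep_def by blast
  fix j assume j: "j \<in> {1..n}"
  have "subspace (K j)"
    using assms(4) j unfolding min_PS_hollow_rep_def H_PS_hollow_def PS_hollow_def by blast
  then have "\<forall>x\<in>K j. PS_hollow scale (span {x})"
    using assms(5) j span_minimal[of "{_}" "K j"] by auto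
  then have "K j \<inter> span (\<Union>i\<in>{1..n} - {j}. K i) \<subseteq> {0}"
    using In_sub_disjoint_imp_independent[of "{1..n} - {j}" j K] assms(6) j by auto
  then show "K j \<inter> span (\<Union>i\<in>{1..n} - {j}. K i) = {0}"
    using \<open>subspace (K j)\<close> span_zero subspace_0 by blast
qed

end
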